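(* For every integer $k\ge 3$ there exist a finite connected graph $G$ and an isometric subgraph $H$ of $G$ such that $c(H)=1$, but $H$ is not $k$-guardable in $G$ (i.e., $k$ cops cannot guard $H$ in $G$).
   Context: All graphs are finite, simple and connected. A subgraph $H$ of $G$ is isometric if $d_H(x,y)=d_G(x,y)$ for all $x,y\in V(H)$. Cops and robber game on $G$: the cops first choose starting vertices, then the robber; then they alternate turns, each player moving each piece to an adjacent vertex or staying; a capture occurs when a cop occupies the robber's vertex. The cop number $c(H)$ is the minimum number of cops that can guarantee capture on $H$. For an isometric subgraph $H$ of $G$ and $k\ge1$, $H$ is $k$-guardable in $G$ if $k$ cops have a strategy such that after finitely many moves the $k$ cops are on vertices of $H$ and from then on always stay in $H$, and whenever the robber enters $H$ he is captured by one of these cops in the next turn. *)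

theory Defs
  imports Main
begin

definition walk :: "('v \<Rightarrow> 'v \<Rightarrow> bool) \<Rightarrow> 'v list \<Rightarrow> bool" where
  "walk E xs \<longleftrightarrow> (\<forall>i. Suc i < length xs \<longrightarrow> E (xs ! i) (xs ! Suc i))"

definition is_path_between :: "'v set \<Rightarrow> ('v \<Rightarrow> 'v \<Rightarrow> bool) \<Rightarrow> 'v \<Rightarrow> 'v \<Rightarrow> 'v list \<Rightarrow> bool" where
  "is_path_between V E x y xs \<longleftrightarrow>
     xs \<noteq> [] \<and> hd xs = x \<and> last xs = y \<and> set xs \<subseteq> V \<and> walk E xs"

definition connected_graph :: "'v set \<Rightarrow> ('v \<Rightarrow> 'v \<Rightarrow> bool) \<Rightarrow> bool" where
  "connected_graph V E \<longleftrightarrow>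
     finite V \<and> V \<noteq> {} \<and>
     (\<forall>x y. E x y \<longrightarrow> x \<in> V \<and> y \<in> V \<and> x \<noteq> y \<and> E y x) \<and>
     (\<forall>x\<in>V. \<forall>y\<in>V. \<exists>xs. is_path_between V E x y xs)"

definition gdist :: "'v set \<Rightarrow> ('v \<Rightarrow> 'v \<Rightarrow> bool) \<Rightarrow> 'v \<Rightarrow> 'v \<Rightarrow> nat" where
  "gdist V E x y = (LEAST n. \<exists>xs. is_path_between V E x y xs \<and> length xs = Suc n)"

definition subgraph :: "'v set \<Rightarrow> ('v \<Rightarrow> 'v \<Rightarrow> bool) \<Rightarrow> 'v set \<Rightarrow> ('v \<Rightarrow> 'v \<Rightarrow> bool) \<Rightarrow> bool" where
  "subgraph V E VH EH \<longleftrightarrow> VH \<subseteq> V \<and> (\<forall>x y. EH x y \<longrightarrow> E x y)"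

definition isometric_subgraph :: "'v set \<Rightarrow> ('v \<Rightarrow> 'v \<Rightarrow> bool) \<Rightarrow> 'v set \<Rightarrow> ('v \<Rightarrow> 'v \<Rightarrow> bool) \<Rightarrow> bool" where
  "isometric_subgraph V E VH EH \<longleftrightarrow>
     connected_graph VH EH \<and> subgraph V E VH EH \<and>
     (\<forall>x\<in>VH. \<forall>y\<in>VH. gdist VH EH x y = gdist V E x y)"

text \<open>A deterministic strategy for k cops is a function S
  mapping the robber's history [r_0,...,r_(n-1)] to the cops' positions C_n
  (a list of length k); C_0 = S [] is the initial placement.  The robber's play is
  an arbitrary sequence r with r_0 in V and each step staying or moving along an edge
  (r_n is chosen knowing C_0..C_n; since S is deterministic, quantifying over all
  such sequences is the same as quantifying over all robber strategies).\<close>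

definition legal_cop_strategy :: "'v set \<Rightarrow> ('v \<Rightarrow> 'v \<Rightarrow> bool) \<Rightarrow> nat \<Rightarrow> ('v list \<Rightarrow> 'v list) \<Rightarrow> bool" where
  "legal_cop_strategy V E k S \<longleftrightarrow>
     (\<forall>h. length (S h) = k \<and> set (S h) \<subseteq> V) \<and>
     (\<forall>h x i. i < k \<longrightarrow> S (h @ [x]) ! i = S h ! i \<or> E (S h ! i) (S (h @ [x]) ! i))"

definition robber_play :: "'v set \<Rightarrow> ('v \<Rightarrow> 'v \<Rightarrow> bool) \<Rightarrow> (nat \<Rightarrow> 'v) \<Rightarrow> bool" where
  "robber_play V E r \<longleftrightarrow> (\<forall>n. r n \<in> V) \<and> (\<forall>n. r (Suc n) = r n \<or> E (r n) (r (Suc n)))"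

definition cops_at :: "('v list \<Rightarrow> 'v list) \<Rightarrow> (nat \<Rightarrow> 'v) \<Rightarrow> nat \<Rightarrow> 'v list" where
  "cops_at S r n = S (map r [0..<n])"

text \<open>Capture in round n: the robber, placed/moved to r_n, lands on a cop (C_n),
  or a cop moves onto him in the cops' next move (C_(n+1)).\<close>
definition captured_at :: "('v list \<Rightarrow> 'v list) \<Rightarrow> (nat \<Rightarrow> 'v) \<Rightarrow> nat \<Rightarrow> bool" where
  "captured_at S r n \<longleftrightarrow> r n \<in> set (cops_at S r n) \<or> r n \<in> set (cops_at S r (Suc n))"

definition cops_win :: "'v set \<Rightarrow> ('v \<Rightarrow> 'v \<Rightarrow> bool) \<Rightarrow> nat \<Rightarrow> bool" where
  "cops_win V E k \<longleftrightarrow>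
     (\<exists>S. legal_cop_strategy V E k S \<and>
          (\<forall>r. robber_play V E r \<longrightarrow> (\<exists>n. captured_at S r n)))"

definition cop_number :: "'v set \<Rightarrow> ('v \<Rightarrow> 'v \<Rightarrow> bool) \<Rightarrow> nat" where
  "cop_number V E = (LEAST k. cops_win V E k)"

definition guardable :: "'v set \<Rightarrow> ('v \<Rightarrow> 'v \<Rightarrow> bool) \<Rightarrow> 'v set \<Rightarrow> ('v \<Rightarrow> 'v \<Rightarrow> bool) \<Rightarrow> nat \<Rightarrow> bool" where
  "guardable V E VH EH k \<longleftrightarrow>
     (\<exists>S. legal_cop_strategy V E k S \<and>
          (\<forall>r. robber_play V E r \<longrightarrow>
             (\<exists>N. \<forall>n\<ge>N. (\<forall>m<n. \<not> captured_at S r m) \<longrightarrow>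
                   set (cops_at S r n) \<subseteq> VH \<and>
                   (r n \<in> VH \<longrightarrow> r n \<in> set (cops_at S r (Suc n))))))"

end

theory Submission
  imports Defs "HOL-Library.Nat_Bijection"
begin

text \<open>The graph G is built from the affine plane over the integers modulo N = 2 k^2 + 1:
  its vertices are the points (x, y) with x \<le> 2 k, the lines y = a x + b with slope a \<le> k,
  and a clique with one vertex for every ordered pair of distinct points, adjacent to both points
  of its pair.  The subgraph H induced by the points and the clique has cop number 1, because the
  clique dominates H and the points are independent in H, and it is isometric, because any two
  nonadjacent vertices of H have a common neighbour in the clique.

  Against k cops the robber alternates between points and lines, always moving to a vertex that no
  cop can reach in one move.  Two lines meet in at most one point, because the slopes differ by at
  most k, the abscissae by at most 2 k, and k * 2 k < N.  Hence each cop watches at most two of the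
  2 k + 1 points of a line (a clique vertex watches its pair, any other vertex at most one point),
  and at most one of the k + 1 lines through a point.  So the robber is never caught, although he
  enters H infinitely often.  The construction works for every k \<ge> 1.\<close>

section \<open>Connectivity and distances\<close>

definition restrict_edges :: "'v set \<Rightarrow> ('v \<Rightarrow> 'v \<Rightarrow> bool) \<Rightarrow> 'v \<Rightarrow> 'v \<Rightarrow> bool" where
  "restrict_edges W E u v \<longleftrightarrow> E u v \<and> u \<in> W \<and> v \<in> W"

definition simple_edges :: "'v set \<Rightarrow> ('v \<Rightarrow> 'v \<Rightarrow> bool) \<Rightarrow> bool" where
  "simple_edges V E \<longleftrightarrow> (\<forall>x y. E x y \<longrightarrow> x \<in> V \<and> y \<in> V \<and> x \<noteq> y \<and> E y x)"

lemma restrict_edges_idem [simp]: "restrict_edges W (restrict_edges W E) = restrict_edges W E"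
  by (auto simp: fun_eq_iff restrict_edges_def)

lemma simple_edges_restrict: "simple_edges V E \<Longrightarrow> simple_edges W (restrict_edges W E)"
  by (auto simp: simple_edges_def restrict_edges_def)

lemma walk_Cons_Cons: "walk E (a # b # xs) \<longleftrightarrow> E a b \<and> walk E (b # xs)"
  by (auto simp: walk_def nth_Cons split: nat.splits)

lemma walk_iff_successively [simp]: "walk E xs \<longleftrightarrow> successively E xs"
  by (induction E xs rule: successively.induct) (simp_all add: walk_Cons_Cons, simp_all add: walk_def)

lemma is_path_between_snoc:
  "is_path_between V E x y xs \<Longrightarrow> E y z \<Longrightarrow> z \<in> V \<Longrightarrow> is_path_between V E x z (xs @ [z])"
  by (simp add: is_path_between_def successively_append_iff)

lemma is_path_between_if_rtranclp:
  assumes "(restrict_edges V E)\<^sup>*\<^sup>* x y" "x \<in> V"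
  shows "\<exists>xs. is_path_between V E x y xs"
  using assms
proof (induction rule: rtranclp_induct)
  case base
  then show ?case
    by (auto simp: is_path_between_def intro: exI[of _ "[x]"])
next
  case (step y z)
  then show ?case
    by (auto simp: restrict_edges_def intro: is_path_between_snoc)
qed

lemma connected_graph_if_reaches_hub:
  assumes "finite V" "hub \<in> V" "simple_edges V E"
    and reach: "\<And>x. x \<in> V \<Longrightarrow> (restrict_edges V E)\<^sup>*\<^sup>* x hub"
  shows "connected_graph V E"
proof -
  have sym: "(restrict_edges V E)\<inverse>\<inverse> = restrict_edges V E"
    using \<open>simple_edges V E\<close> by (auto simp: fun_eq_iff simple_edges_def restrict_edges_def)
  have "\<exists>xs. is_path_between V E x y xs" if "x \<in> V" "y \<in> V" for x y
  proof -
    have "(restrict_edges V E)\<^sup>*\<^sup>* hub y"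
      using rtranclp_converseI[OF reach[OF \<open>y \<in> V\<close>]] by (simp only: sym)
    with reach[OF \<open>x \<in> V\<close>] have "(restrict_edges V E)\<^sup>*\<^sup>* x y"
      by (rule rtranclp_trans)
    then show ?thesis
      using \<open>x \<in> V\<close> by (rule is_path_between_if_rtranclp)
  qed
  moreover have "V \<noteq> {}"
    using \<open>hub \<in> V\<close> by blast
  ultimately show ?thesis
    using assms(1,3) by (simp add: connected_graph_def simple_edges_def)
qed

lemma gdist_self: "x \<in> V \<Longrightarrow> gdist V E x x = 0"
  unfolding gdist_def
  by (rule Least_eq_0) (auto simp: is_path_between_def intro!: exI[of _ "[x]"])

lemma is_path_between_short:
  assumes "is_path_between V E x y xs"
  shows "length xs = 1 \<Longrightarrow> x = y" and "length xs = 2 \<Longrightarrow> E x y"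
  using assms by (auto simp: is_path_between_def length_Suc_conv numeral_2_eq_2)

lemma gdist_eq_1:
  assumes "x \<in> V" "y \<in> V" "E x y" "x \<noteq> y"
  shows "gdist V E x y = 1"
  unfolding gdist_def
proof (rule Least_equality)
  show "\<exists>xs. is_path_between V E x y xs \<and> length xs = Suc 1"
    using assms by (auto simp: is_path_between_def intro!: exI[of _ "[x, y]"])
next
  fix n assume "\<exists>xs. is_path_between V E x y xs \<and> length xs = Suc n"
  then obtain xs where xs: "is_path_between V E x y xs" "length xs = Suc n"
    by blast
  have "n \<noteq> 0"
    using is_path_between_short(1)[OF xs(1)] xs(2) \<open>x \<noteq> y\<close> by auto
  then show "1 \<le> n"
    by simp
qed

lemma gdist_eq_2:
  assumes "x \<in> V" "y \<in> V" "z \<in> V" "E x z" "E z y" "\<not> E x y" "x \<noteq> y"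
  shows "gdist V E x y = 2"
  unfolding gdist_def
proof (rule Least_equality)
  show "\<exists>xs. is_path_between V E x y xs \<and> length xs = Suc 2"
    using assms by (auto simp: is_path_between_def intro!: exI[of _ "[x, z, y]"])
next
  fix n assume "\<exists>xs. is_path_between V E x y xs \<and> length xs = Suc n"
  then obtain xs where xs: "is_path_between V E x y xs" "length xs = Suc n"
    by blast
  have "n \<noteq> 0"
    using is_path_between_short(1)[OF xs(1)] xs(2) \<open>x \<noteq> y\<close> by auto
  moreover have "n \<noteq> 1"
    using is_path_between_short(2)[OF xs(1)] xs(2) \<open>\<not> E x y\<close> by auto
  ultimately show "2 \<le> n"
    by simp
qed

lemma isometric_subgraph_restrict_edges:
  assumes conn: "connected_graph W (restrict_edges W E)" and "W \<subseteq> V"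
    and common_nbr: "\<And>x y. x \<in> W \<Longrightarrow> y \<in> W \<Longrightarrow> x \<noteq> y \<Longrightarrow> \<not> E x y \<Longrightarrow> \<exists>z\<in>W. E x z \<and> E z y"
  shows "isometric_subgraph V E W (restrict_edges W E)"
  unfolding isometric_subgraph_def
proof (intro conjI ballI)
  show "subgraph V E W (restrict_edges W E)"
    using \<open>W \<subseteq> V\<close> by (simp add: subgraph_def restrict_edges_def)
  fix x y assume x: "x \<in> W" and y: "y \<in> W"
  consider "x = y" | "x \<noteq> y" "E x y" | "x \<noteq> y" "\<not> E x y"
    by blast
  then show "gdist W (restrict_edges W E) x y = gdist V E x y"
  proof cases
    case 1
    then show ?thesis
      using x \<open>W \<subseteq> V\<close> by (simp add: gdist_self subsetD)
  next
    case 2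
    then show ?thesis
      using x y \<open>W \<subseteq> V\<close> by (simp add: gdist_eq_1 restrict_edges_def subsetD)
  next
    case 3
    then obtain z where "z \<in> W" "E x z" "E z y"
      using common_nbr x y by blast
    with 3 x y \<open>W \<subseteq> V\<close> have "gdist W (restrict_edges W E) x y = 2" "gdist V E x y = 2"
      by (auto simp: restrict_edges_def intro!: gdist_eq_2[where z = z])
    then show ?thesis
      by simp
  qed
qed (rule conn)

section \<open>Winning and evading strategies\<close>

lemma cop_number_eq_1:
  assumes "cops_win V E 1" "\<not> cops_win V E 0"
  shows "cop_number V E = 1"
  unfolding cop_number_def
proof (rule Least_equality)
  fix j assume "cops_win V E j"
  with assms(2) show "1 \<le> j"
    by (cases j) auto
qed (rule assms(1))

lemma not_cops_win_0:
  assumes "x \<in> V"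
  shows "\<not> cops_win V E 0"
proof
  assume "cops_win V E 0"
  then obtain S where S: "legal_cop_strategy V E 0 S"
    and win: "\<forall>r. robber_play V E r \<longrightarrow> (\<exists>n. captured_at S r n)"
    unfolding cops_win_def by blast
  have "robber_play V E (\<lambda>_. x)"
    using assms by (simp add: robber_play_def)
  with win obtain n where "captured_at S (\<lambda>_. x) n"
    by blast
  moreover have "S h = []" for h
    using S by (simp add: legal_cop_strategy_def)
  ultimately show False
    by (simp add: captured_at_def cops_at_def)
qed

lemma cops_win_1_if_dominating_clique:
  assumes "m \<in> M" "M \<subseteq> V"
    and clique: "\<And>x y. x \<in> M \<Longrightarrow> y \<in> M \<Longrightarrow> x \<noteq> y \<Longrightarrow> E x y"
    and dominating: "\<And>v. v \<in> V \<Longrightarrow> v \<notin> M \<Longrightarrow> \<exists>u\<in>M. E u v"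
    and independent: "\<And>v u. v \<in> V \<Longrightarrow> v \<notin> M \<Longrightarrow> E v u \<Longrightarrow> u \<in> M"
    and edges: "\<And>u v. E u v \<Longrightarrow> u \<in> V \<and> v \<in> V"
  shows "cops_win V E 1"
proof -
  define g where "g v = (SOME u. u \<in> M \<and> E u v)" for v
  \<comment> \<open>From the clique the cop captures or moves next to the robber, who can then only stay
    or step into the clique, next to the cop again.\<close>
  define chase where
    "chase c x = (if x = c \<or> E c x then x else if c \<in> M \<and> x \<in> V then g x else c)" for c x
  define S where "S h = [foldl chase m h]" for h
  have g: "g x \<in> M \<and> E (g x) x" if "c \<in> M" "x \<in> V" "\<not> (x = c \<or> E c x)" for c x
  proof -
    have "x \<notin> M"
      using that clique by blast
    with dominating[OF \<open>x \<in> V\<close>] have "\<exists>u. u \<in> M \<and> E u x"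
      by blast
    then show ?thesis
      unfolding g_def by (rule someI_ex)
  qed
  have chase_V: "chase c x \<in> V" if "c \<in> V" for c x
    using that g edges \<open>M \<subseteq> V\<close> by (auto simp: chase_def)
  have chase_move: "chase c x = c \<or> E c (chase c x)" for c x
    using g clique by (auto simp: chase_def)
  have "foldl chase m h \<in> V" for h
    using \<open>m \<in> M\<close> \<open>M \<subseteq> V\<close> chase_V by (induction h rule: rev_induct) auto
  with chase_move have legal: "legal_cop_strategy V E 1 S"
    by (simp add: legal_cop_strategy_def S_def)
  have "\<exists>n. captured_at S r n" if play: "robber_play V E r" for r
  proof -
    define c where "c n = foldl chase m (map r [0..<n])" for n
    have capture: "captured_at S r n" if "r n = c n \<or> E (c n) (r n)" for n
      using that by (simp add: captured_at_def cops_at_def S_def c_def chase_def)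
    have r_V: "r n \<in> V" and r_step: "r (Suc n) = r n \<or> E (r n) (r (Suc n))" for n
      using play by (auto simp: robber_play_def)
    show ?thesis
    proof (cases "r 0 = m \<or> E m (r 0)")
      case True
      then show ?thesis
        using capture[of 0] by (auto simp: c_def)
    next
      case False
      then have c1: "c 1 = g (r 0)" "g (r 0) \<in> M" "E (g (r 0)) (r 0)"
        using g[OF \<open>m \<in> M\<close> r_V] \<open>m \<in> M\<close> r_V by (auto simp: c_def chase_def)
      have "r 0 \<notin> M"
        using False \<open>m \<in> M\<close> clique by blast
      then have "r 1 = r 0 \<or> r 1 \<in> M"
        using r_step[of 0] independent r_V by auto
      then have "r 1 = c 1 \<or> E (c 1) (r 1)"
        using c1 clique by (metis One_nat_def)
      then show ?thesis
        using capture by blast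
    qed
  qed
  with legal show ?thesis
    unfolding cops_win_def by blast
qed

definition safe :: "('v \<Rightarrow> 'v \<Rightarrow> bool) \<Rightarrow> 'v list \<Rightarrow> 'v \<Rightarrow> bool" where
  "safe E C x \<longleftrightarrow> (\<forall>c\<in>set C. c \<noteq> x \<and> \<not> E c x)"

lemma legal_cop_strategy_length: "legal_cop_strategy V E k S \<Longrightarrow> length (S h) = k"
  by (simp add: legal_cop_strategy_def)

lemma legal_cop_strategy_misses_safe:
  assumes "legal_cop_strategy V E k S" "safe E (S h) x"
  shows "x \<notin> set (S (h @ [y]))"
proof
  assume "x \<in> set (S (h @ [y]))"
  then obtain i where i: "i < k" "x = S (h @ [y]) ! i"
    using legal_cop_strategy_length[OF assms(1)] by (metis in_set_conv_nth)
  then have "S h ! i = x \<or> E (S h ! i) x"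
    using assms(1) unfolding legal_cop_strategy_def by metis
  moreover have "S h ! i \<in> set (S h)"
    using i legal_cop_strategy_length[OF assms(1)] by simp
  ultimately show False
    using assms(2) by (auto simp: safe_def)
qed

lemma exists_safe_vertex:
  assumes "finite X" "length C \<le> k"
    and covered: "\<And>c. c \<in> set C \<Longrightarrow> card {x \<in> X. x = c \<or> E c x} \<le> t"
    and "k * t < card X"
  shows "\<exists>x\<in>X. safe E C x"
proof (rule ccontr)
  assume "\<not> ?thesis"
  then have "X \<subseteq> (\<Union>c\<in>set C. {x \<in> X. x = c \<or> E c x})"
    by (auto simp: safe_def)
  then have "card X \<le> card (\<Union>c\<in>set C. {x \<in> X. x = c \<or> E c x})"
    using \<open>finite X\<close> by (intro card_mono) auto
  also have "\<dots> \<le> (\<Sum>c\<in>set C. card {x \<in> X. x = c \<or> E c x})"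
    by (rule card_UN_le) simp
  also have "\<dots> \<le> card (set C) * t"
    using sum_bounded_above[of "set C" _ t] covered by simp
  also have "\<dots> \<le> k * t"
    using card_length[of C] \<open>length C \<le> k\<close> by simp
  finally show False
    using \<open>k * t < card X\<close> by simp
qed

lemma robber_evades:
  assumes legal: "legal_cop_strategy V E k S"
    and region_V: "\<And>n. region n \<subseteq> V"
    and start: "\<And>C. length C = k \<Longrightarrow> \<exists>v\<in>region 0. safe E C v"
    and step: "\<And>n w C. w \<in> region n \<Longrightarrow> length C = k \<Longrightarrow> w \<notin> set C \<Longrightarrow>
                 \<exists>v\<in>region (Suc n). E w v \<and> safe E C v"
  obtains r where "robber_play V E r" "\<And>n. \<not> captured_at S r n" "\<And>n. r n \<in> region n"
proof -
  define good where
    "good h v \<longleftrightarrow> v \<in> region (length h) \<and> (h \<noteq> [] \<longrightarrow> E (last h) v) \<and> safe E (S h) v" for h v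
  define hist where "hist n = rec_nat [] (\<lambda>_ h. h @ [SOME v. good h v]) n" for n
  define r where "r n = (SOME v. good (hist n) v)" for n
  have hist_Suc: "hist (Suc n) = hist n @ [r n]" for n
    by (simp add: hist_def r_def)
  have hist: "hist n = map r [0..<n]" for n
    by (induction n) (simp_all add: hist_Suc, simp add: hist_def)
  then have length_hist: "length (hist n) = n" for n
    by simp
  have good: "good (hist n) (r n)" for n
  proof (induction n)
    case 0
    obtain v where "good [] v"
      using start[OF legal_cop_strategy_length[OF legal]] by (auto simp: good_def)
    then show ?case
      unfolding r_def by (simp add: hist someI)
  next
    case (Suc n)
    have "r n \<in> region n"
      using Suc by (simp add: good_def length_hist)
    moreover have "r n \<notin> set (S (hist (Suc n)))"
      using Suc legal_cop_strategy_misses_safe[OF legal] by (simp add: hist_Suc good_def)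
    ultimately obtain v where "v \<in> region (Suc n)" "E (r n) v" "safe E (S (hist (Suc n))) v"
      using step legal_cop_strategy_length[OF legal] by blast
    then have "good (hist (Suc n)) v"
      by (simp add: good_def hist_Suc length_hist)
    then show ?case
      unfolding r_def[of "Suc n"] by (rule someI)
  qed
  show ?thesis
  proof
    show "r n \<in> region n" for n
      using good[of n] by (simp add: good_def length_hist)
    moreover have "E (r n) (r (Suc n))" for n
      using good[of "Suc n"] by (simp add: good_def hist_Suc)
    ultimately show "robber_play V E r"
      using region_V by (auto simp: robber_play_def)
    show "\<not> captured_at S r n" for n
      using good[of n] legal_cop_strategy_misses_safe[OF legal, of "hist n" "r n" "r n"]
      by (auto simp: captured_at_def cops_at_def good_def safe_def hist_Suc simp flip: hist)
  qed
qed

lemma not_guardable_if_robber_evades: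
  assumes region_V: "\<And>n. region n \<subseteq> V"
    and start: "\<And>C. length C = k \<Longrightarrow> \<exists>v\<in>region 0. safe E C v"
    and step: "\<And>n w C. w \<in> region n \<Longrightarrow> length C = k \<Longrightarrow> w \<notin> set C \<Longrightarrow>
                 \<exists>v\<in>region (Suc n). E w v \<and> safe E C v"
    and recurrent: "\<And>N. \<exists>n\<ge>N. region n \<subseteq> VH"
  shows "\<not> guardable V E VH EH k"
proof
  assume "guardable V E VH EH k"
  then obtain S where legal: "legal_cop_strategy V E k S"
    and guard: "\<And>r. robber_play V E r \<Longrightarrow> \<exists>N. \<forall>n\<ge>N. (\<forall>m<n. \<not> captured_at S r m) \<longrightarrow>
                   set (cops_at S r n) \<subseteq> VH \<and> (r n \<in> VH \<longrightarrow> r n \<in> set (cops_at S r (Suc n)))"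
    unfolding guardable_def by blast
  obtain r where "robber_play V E r" and escape: "\<And>n. \<not> captured_at S r n"
    and r_region: "\<And>n. r n \<in> region n"
    using robber_evades[OF legal region_V start step] by blast
  then obtain N where N: "\<forall>n\<ge>N. r n \<in> VH \<longrightarrow> r n \<in> set (cops_at S r (Suc n))"
    using guard by blast
  obtain n where "n \<ge> N" "region n \<subseteq> VH"
    using recurrent by blast
  with N r_region have "captured_at S r n"
    by (auto simp: captured_at_def)
  with escape show False
    by blast
qed

section \<open>Lines modulo 2 k^2 + 1\<close>

definition modulus :: "nat \<Rightarrow> nat" where
  "modulus k = 2 * k * k + 1"

lemma modulus_pos: "0 < modulus k"
  by (simp add: modulus_def)

definition incident :: "nat \<Rightarrow> nat \<Rightarrow> nat \<Rightarrow> nat \<Rightarrow> nat \<Rightarrow> bool" where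
  "incident k x y a b \<longleftrightarrow> int y = (int a * int x + int b) mod int (modulus k)"

lemma dvd_abs_less_imp_eq_0:
  fixes m n :: int
  assumes "n dvd m" "\<bar>m\<bar> < n"
  shows "m = 0"
  using dvd_imp_le_int[OF _ assms(1)] assms(2) by fastforce

lemma incident_unique:
  assumes "a \<le> k" "a' \<le> k" "x \<le> 2 * k" "x' \<le> 2 * k" "b < modulus k" "b' < modulus k"
    and "incident k x y a b" "incident k x y a' b'" "incident k x' y' a b" "incident k x' y' a' b'"
  shows "(x, y) = (x', y') \<or> (a, b) = (a', b')"
proof -
  define n where "n = int (modulus k)"
  have dvd_x: "n dvd (int a * int x + int b) - (int a' * int x + int b')"
    and "n dvd (int a * int x' + int b) - (int a' * int x' + int b')"
    using assms(7-10) by (simp_all add: incident_def n_def flip: mod_eq_dvd_iff)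
  then have "n dvd ((int a * int x + int b) - (int a' * int x + int b'))
                  - ((int a * int x' + int b) - (int a' * int x' + int b'))"
    by (rule dvd_diff)
  then have dvd: "n dvd (int a - int a') * (int x - int x')"
    by (simp add: algebra_simps)
  have "\<bar>(int a - int a') * (int x - int x')\<bar> \<le> int k * (2 * int k)"
    unfolding abs_mult using assms(1-4) by (intro mult_mono) auto
  also have "\<dots> < n"
    by (simp add: n_def modulus_def)
  finally have "(int a - int a') * (int x - int x') = 0"
    using dvd by (intro dvd_abs_less_imp_eq_0)
  then consider "x = x'" | "a = a'"
    by fastforce
  then show ?thesis
  proof cases
    case 1
    then show ?thesis
      using assms(7,9) by (simp add: incident_def)
  next
    case 2
    have "n dvd int b - int b'"
      using dvd_x 2 by simp
    moreover have "\<bar>int b - int b'\<bar> < n"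
      using assms(5,6) by (simp add: n_def)
    ultimately have "b = b'"
      by (auto dest: dvd_abs_less_imp_eq_0)
    with 2 show ?thesis
      by simp
  qed
qed

section \<open>The graphs G and H\<close>

definition point :: "nat \<Rightarrow> nat \<Rightarrow> nat" where
  "point x y = 3 * prod_encode (x, y)"

definition line :: "nat \<Rightarrow> nat \<Rightarrow> nat" where
  "line a b = 3 * prod_encode (a, b) + 1"

definition clique_vertex :: "nat \<Rightarrow> nat \<Rightarrow> nat" where
  "clique_vertex p q = 3 * prod_encode (p, q) + 2"

lemma vertex_eq_iff [simp]:
  "point x y = point x' y' \<longleftrightarrow> x = x' \<and> y = y'"
  "line a b = line a' b' \<longleftrightarrow> a = a' \<and> b = b'"
  "clique_vertex p q = clique_vertex p' q' \<longleftrightarrow> p = p' \<and> q = q'"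
  by (auto simp: point_def line_def clique_vertex_def prod_encode_eq)

lemma vertex_distinct [simp]:
  "point x y \<noteq> line a b" "line a b \<noteq> point x y"
  "point x y \<noteq> clique_vertex p q" "clique_vertex p q \<noteq> point x y"
  "line a b \<noteq> clique_vertex p q" "clique_vertex p q \<noteq> line a b"
  unfolding point_def line_def clique_vertex_def by presburger+

lemma vertex_exhaust:
  obtains (point) x y where "u = point x y"
    | (line) a b where "u = line a b"
    | (clique_vertex) p q where "u = clique_vertex p q"
proof -
  obtain i j where ij: "prod_encode (i, j) = u div 3"
    by (metis prod_decode_inverse surj_pair)
  have "u = 3 * (u div 3) + u mod 3" "u mod 3 < 3"
    by simp_all
  then consider "u = 3 * prod_encode (i, j)" | "u = 3 * prod_encode (i, j) + 1"
    | "u = 3 * prod_encode (i, j) + 2"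
    unfolding ij by linarith
  then show ?thesis
    by cases (auto simp: point_def line_def clique_vertex_def intro: that)
qed

definition points :: "nat \<Rightarrow> nat set" where
  "points k = {point x y | x y. x \<le> 2 * k \<and> y < modulus k}"

definition lines :: "nat \<Rightarrow> nat set" where
  "lines k = {line a b | a b. a \<le> k \<and> b < modulus k}"

definition clique :: "nat \<Rightarrow> nat set" where
  "clique k = {clique_vertex p q | p q. p \<in> points k \<and> q \<in> points k \<and> p \<noteq> q}"

lemma vertex_mem_iff [simp]:
  "point x y \<in> points k \<longleftrightarrow> x \<le> 2 * k \<and> y < modulus k"
  "line a b \<in> lines k \<longleftrightarrow> a \<le> k \<and> b < modulus k"
  "clique_vertex p q \<in> clique k \<longleftrightarrow> p \<in> points k \<and> q \<in> points k \<and> p \<noteq> q"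
  "point x y \<notin> lines k" "point x y \<notin> clique k"
  "line a b \<notin> points k" "line a b \<notin> clique k"
  "clique_vertex p q \<notin> points k" "clique_vertex p q \<notin> lines k"
  by (auto simp: points_def lines_def clique_def)

lemma pointsE:
  assumes "u \<in> points k"
  obtains x y where "u = point x y" "x \<le> 2 * k" "y < modulus k"
  using assms by (auto simp: points_def)

lemma linesE:
  assumes "u \<in> lines k"
  obtains a b where "u = line a b" "a \<le> k" "b < modulus k"
  using assms by (auto simp: lines_def)

lemma cliqueE:
  assumes "u \<in> clique k"
  obtains p q where "u = clique_vertex p q" "p \<in> points k" "q \<in> points k" "p \<noteq> q"
  using assms by (auto simp: clique_def)

lemma finite_points: "finite (points k)"
proof -
  have "points k \<subseteq> case_prod point ` ({..2 * k} \<times> {..<modulus k})"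
    by (auto simp: points_def)
  then show ?thesis
    by (rule finite_subset) simp
qed

lemma finite_lines: "finite (lines k)"
proof -
  have "lines k \<subseteq> case_prod line ` ({..k} \<times> {..<modulus k})"
    by (auto simp: lines_def)
  then show ?thesis
    by (rule finite_subset) simp
qed

lemma finite_clique: "finite (clique k)"
proof -
  have "clique k \<subseteq> case_prod clique_vertex ` (points k \<times> points k)"
    by (auto simp: clique_def)
  then show ?thesis
    by (rule finite_subset) (simp add: finite_points)
qed

definition G_verts :: "nat \<Rightarrow> nat set" where
  "G_verts k = points k \<union> lines k \<union> clique k"

definition H_verts :: "nat \<Rightarrow> nat set" where
  "H_verts k = points k \<union> clique k"

definition G_arc :: "nat \<Rightarrow> nat \<Rightarrow> nat \<Rightarrow> bool" where
  "G_arc k u v \<longleftrightarrow>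
     (\<exists>x y a b. u = point x y \<and> v = line a b \<and> u \<in> points k \<and> v \<in> lines k \<and> incident k x y a b) \<or>
     (\<exists>p q. u \<in> points k \<and> v = clique_vertex p q \<and> v \<in> clique k \<and> (u = p \<or> u = q)) \<or>
     (u \<in> clique k \<and> v \<in> clique k \<and> u \<noteq> v)"

definition G_edge :: "nat \<Rightarrow> nat \<Rightarrow> nat \<Rightarrow> bool" where
  "G_edge k u v \<longleftrightarrow> G_arc k u v \<or> G_arc k v u"

abbreviation H_edge :: "nat \<Rightarrow> nat \<Rightarrow> nat \<Rightarrow> bool" where
  "H_edge k \<equiv> restrict_edges (H_verts k) (G_edge k)"

lemma G_edge_simps [simp]:
  "G_edge k (point x y) (point x' y') \<longleftrightarrow> False"
  "G_edge k (line a b) (line a' b') \<longleftrightarrow> False"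
  "G_edge k (point x y) (line a b) \<longleftrightarrow>
     point x y \<in> points k \<and> line a b \<in> lines k \<and> incident k x y a b"
  "G_edge k (line a b) (point x y) \<longleftrightarrow>
     point x y \<in> points k \<and> line a b \<in> lines k \<and> incident k x y a b"
  "G_edge k (line a b) (clique_vertex p q) \<longleftrightarrow> False"
  "G_edge k (clique_vertex p q) (line a b) \<longleftrightarrow> False"
  "G_edge k (point x y) (clique_vertex p q) \<longleftrightarrow>
     p \<in> points k \<and> q \<in> points k \<and> p \<noteq> q \<and> (p = point x y \<or> q = point x y)"
  "G_edge k (clique_vertex p q) (point x y) \<longleftrightarrow>
     p \<in> points k \<and> q \<in> points k \<and> p \<noteq> q \<and> (p = point x y \<or> q = point x y)"
  "G_edge k (clique_vertex p q) (clique_vertex p' q') \<longleftrightarrow>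
     clique_vertex p q \<in> clique k \<and> clique_vertex p' q' \<in> clique k \<and> (p \<noteq> p' \<or> q \<noteq> q')"
  by (auto simp: G_edge_def G_arc_def simp del: vertex_mem_iff(3))
    (auto elim: pointsE)

lemma G_edge_clique: "u \<in> clique k \<Longrightarrow> v \<in> clique k \<Longrightarrow> u \<noteq> v \<Longrightarrow> G_edge k u v"
  by (auto elim!: cliqueE)

lemma G_edge_sym: "G_edge k u v \<Longrightarrow> G_edge k v u"
  by (auto simp: G_edge_def)

lemma G_edge_verts: "G_edge k u v \<Longrightarrow> u \<in> G_verts k \<and> v \<in> G_verts k"
  by (auto simp: G_edge_def G_arc_def G_verts_def clique_def)

lemma G_edge_irrefl: "\<not> G_edge k u u"
  by (cases u rule: vertex_exhaust) auto

lemma simple_edges_G: "simple_edges (G_verts k) (G_edge k)"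
  using G_edge_sym G_edge_verts G_edge_irrefl by (metis simple_edges_def)

section \<open>The robber evades k cops\<close>

lemma card_points_on_line:
  assumes "line a b \<in> lines k"
  shows "2 * k + 1 \<le> card {v \<in> points k. G_edge k (line a b) v}"
proof -
  define f where "f x = point x (nat ((int a * int x + int b) mod int (modulus k)))" for x
  have "f ` {..2 * k} \<subseteq> {v \<in> points k. G_edge k (line a b) v}"
    using assms modulus_pos by (auto simp: f_def incident_def nat_less_iff)
  moreover have "inj_on f {..2 * k}"
    by (simp add: f_def inj_on_def)
  ultimately have "card {..2 * k} \<le> card {v \<in> points k. G_edge k (line a b) v}"
    by (intro card_inj_on_le) (simp_all add: finite_points)
  then show ?thesis
    by simp
qed

lemma card_lines_through_point:
  assumes "point x y \<in> points k"
  shows "k + 1 \<le> card {w \<in> lines k. G_edge k (point x y) w}"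
proof -
  define f where "f a = line a (nat ((int y - int a * int x) mod int (modulus k)))" for a
  have "incident k x y a (nat ((int y - int a * int x) mod int (modulus k)))" for a
    using assms modulus_pos by (simp add: incident_def mod_add_right_eq)
  then have "f ` {..k} \<subseteq> {w \<in> lines k. G_edge k (point x y) w}"
    using assms modulus_pos by (auto simp: f_def nat_less_iff)
  moreover have "inj_on f {..k}"
    by (simp add: f_def inj_on_def)
  ultimately have "card {..k} \<le> card {w \<in> lines k. G_edge k (point x y) w}"
    by (intro card_inj_on_le) (simp_all add: finite_lines)
  then show ?thesis
    by simp
qed

lemma points_on_line_covered:
  assumes "line a b \<in> lines k" "c \<noteq> line a b"
  shows "card {v \<in> points k. G_edge k (line a b) v \<and> (v = c \<or> G_edge k c v)} \<le> 2"
proof -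
  let ?S = "{v \<in> points k. G_edge k (line a b) v \<and> (v = c \<or> G_edge k c v)}"
  have "\<exists>p q. ?S \<subseteq> {p, q}"
  proof (cases c rule: vertex_exhaust)
    case (point x y)
    then have "?S \<subseteq> {c, c}"
      by (auto elim!: pointsE)
    then show ?thesis
      by blast
  next
    case (line a' b')
    have "u = v" if u: "u \<in> ?S" and v: "v \<in> ?S" for u v
    proof -
      obtain x y where "u = point x y"
        using u by (blast elim: pointsE)
      moreover obtain x' y' where "v = point x' y'"
        using v by (blast elim: pointsE)
      ultimately show ?thesis
        using u v line assms incident_unique[of a k a' x x' b b' y y'] by auto
    qed
    then show ?thesis
      by blast
  next
    case (clique_vertex p q)
    then have "?S \<subseteq> {p, q}"
      by (auto elim!: pointsE)
    then show ?thesis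
      by blast
  qed
  then obtain p q where "?S \<subseteq> {p, q}"
    by blast
  then have "card ?S \<le> card {p, q}"
    by (intro card_mono) simp_all
  also have "\<dots> \<le> 2"
    by (simp add: card_insert_if)
  finally show ?thesis .
qed

lemma lines_through_point_covered:
  assumes "point x y \<in> points k" "c \<noteq> point x y"
  shows "card {w \<in> lines k. G_edge k (point x y) w \<and> (w = c \<or> G_edge k c w)} \<le> 1"
proof -
  let ?S = "{w \<in> lines k. G_edge k (point x y) w \<and> (w = c \<or> G_edge k c w)}"
  have "\<exists>z. ?S \<subseteq> {z}"
  proof (cases c rule: vertex_exhaust)
    case (point x' y')
    have "u = v" if u: "u \<in> ?S" and v: "v \<in> ?S" for u v
    proof -
      obtain a b where "u = line a b"
        using u by (blast elim: linesE)
      moreover obtain a' b' where "v = line a' b'"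
        using v by (blast elim: linesE)
      ultimately show ?thesis
        using u v point assms incident_unique[of a k a' x x' b b' y y'] by auto
    qed
    then show ?thesis
      by blast
  qed (auto elim!: linesE)
  then obtain z where "?S \<subseteq> {z}"
    by blast
  then have "card ?S \<le> card {z}"
    by (intro card_mono) simp_all
  then show ?thesis
    by simp
qed

lemma line_has_safe_point:
  assumes "w \<in> lines k" "length C = k" "w \<notin> set C"
  shows "\<exists>v\<in>points k. G_edge k w v \<and> safe (G_edge k) C v"
proof -
  obtain a b where w: "w = line a b"
    using assms(1) by (blast elim: linesE)
  have "\<exists>v\<in>{v \<in> points k. G_edge k w v}. safe (G_edge k) C v"
  proof (rule exists_safe_vertex[where t = 2])
    show "card {v \<in> {v \<in> points k. G_edge k w v}. v = c \<or> G_edge k c v} \<le> 2" if "c \<in> set C" for c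
      using points_on_line_covered[of a b k c] that assms w by (auto simp: conj_assoc)
    show "k * 2 < card {v \<in> points k. G_edge k w v}"
      using card_points_on_line[of a b k] assms w by simp
  qed (simp_all add: finite_points assms)
  then show ?thesis
    by auto
qed

lemma point_has_safe_line:
  assumes "v \<in> points k" "length C = k" "v \<notin> set C"
  shows "\<exists>w\<in>lines k. G_edge k v w \<and> safe (G_edge k) C w"
proof -
  obtain x y where v: "v = point x y"
    using assms(1) by (blast elim: pointsE)
  have "\<exists>w\<in>{w \<in> lines k. G_edge k v w}. safe (G_edge k) C w"
  proof (rule exists_safe_vertex[where t = 1])
    show "card {w \<in> {w \<in> lines k. G_edge k v w}. w = c \<or> G_edge k c w} \<le> 1" if "c \<in> set C" for c
      using lines_through_point_covered[of x y k c] that assms v by (auto simp: conj_assoc)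
    show "k * 1 < card {w \<in> lines k. G_edge k v w}"
      using card_lines_through_point[of x y k] assms v by simp
  qed (simp_all add: finite_lines assms)
  then show ?thesis
    by auto
qed

lemma exists_safe_point:
  assumes "length C = k"
  shows "\<exists>v\<in>points k. safe (G_edge k) C v"
proof -
  have "card (line 0 ` {..<modulus k}) = modulus k"
    by (simp add: card_image inj_on_def)
  moreover have "k < modulus k"
    by (cases k) (simp_all add: modulus_def)
  then have "card (set C) < modulus k"
    using card_length[of C] assms by simp
  ultimately obtain w where "w \<in> line 0 ` {..<modulus k}" "w \<notin> set C"
    by (metis card_mono finite_set leD subsetI)
  moreover from this(1) have "w \<in> lines k"
    by auto
  ultimately show ?thesis
    using line_has_safe_point[OF _ assms] by blast
qed

lemma not_guardable_H:
  "\<not> guardable (G_verts k) (G_edge k) (H_verts k) (H_edge k) k"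
proof (rule not_guardable_if_robber_evades[where region = "\<lambda>n. if even n then points k else lines k"])
  show "\<exists>v\<in>(if even (Suc n) then points k else lines k). G_edge k w v \<and> safe (G_edge k) C v"
    if "w \<in> (if even n then points k else lines k)" "length C = k" "w \<notin> set C" for n w C
    using that point_has_safe_line line_has_safe_point by (cases "even n") auto
  show "\<exists>n\<ge>N. (if even n then points k else lines k) \<subseteq> H_verts k" for N :: nat
    by (rule exI[of _ "2 * N"]) (simp add: H_verts_def)
qed (auto simp: G_verts_def exists_safe_point)

section \<open>The subgraph H\<close>

definition hub :: nat where
  "hub = clique_vertex (point 0 0) (point 1 0)"

lemma hub_in_clique: "1 \<le> k \<Longrightarrow> hub \<in> clique k"
  by (simp add: hub_def modulus_def)

lemma point_has_clique_neighbour: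
  assumes "1 \<le> k" "v \<in> points k"
  shows "\<exists>u\<in>clique k. G_edge k v u"
proof -
  define v' where "v' = (if v = point 0 0 then point 1 0 else point 0 0)"
  have "v' \<in> points k" "v' \<noteq> v"
    using assms by (auto simp: v'_def modulus_def)
  with assms show ?thesis
    by (auto elim!: pointsE intro!: bexI[of _ "clique_vertex v v'"])
qed

lemma H_reaches_hub:
  assumes "1 \<le> k" "u \<in> H_verts k"
  shows "(H_edge k)\<^sup>*\<^sup>* u hub"
proof -
  have clique_reaches: "(H_edge k)\<^sup>*\<^sup>* u hub" if "u \<in> clique k" for u
    using that hub_in_clique[OF assms(1)] G_edge_clique[of u k hub]
    by (cases "u = hub") (auto simp: restrict_edges_def H_verts_def)
  show ?thesis
  proof (cases "u \<in> clique k")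
    case False
    then have "u \<in> points k"
      using assms(2) by (simp add: H_verts_def)
    then obtain u' where "u' \<in> clique k" "G_edge k u u'"
      using point_has_clique_neighbour[OF assms(1)] by blast
    then show ?thesis
      using \<open>u \<in> points k\<close> clique_reaches
      by (auto simp: restrict_edges_def H_verts_def intro: converse_rtranclp_into_rtranclp)
  qed (rule clique_reaches)
qed

lemma connected_H: "1 \<le> k \<Longrightarrow> connected_graph (H_verts k) (H_edge k)"
  using hub_in_clique H_reaches_hub simple_edges_restrict[OF simple_edges_G]
  by (intro connected_graph_if_reaches_hub) (auto simp: H_verts_def finite_points finite_clique)

lemma connected_G:
  assumes "1 \<le> k"
  shows "connected_graph (G_verts k) (G_edge k)"
proof (rule connected_graph_if_reaches_hub)
  have H_G: "(H_edge k)\<^sup>*\<^sup>* \<le> (restrict_edges (G_verts k) (G_edge k))\<^sup>*\<^sup>*"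
    by (intro rtranclp_mono) (auto simp: restrict_edges_def H_verts_def G_verts_def)
  show "(restrict_edges (G_verts k) (G_edge k))\<^sup>*\<^sup>* u hub" if "u \<in> G_verts k" for u
  proof (cases "u \<in> lines k")
    case True
    then obtain a b where "u = line a b" "b < modulus k"
      by (blast elim: linesE)
    then have "restrict_edges (G_verts k) (G_edge k) u (point 0 b)" "point 0 b \<in> H_verts k"
      using True by (auto simp: restrict_edges_def G_verts_def H_verts_def incident_def)
    then show ?thesis
      using H_G H_reaches_hub[OF assms] by (blast intro: converse_rtranclp_into_rtranclp)
  next
    case False
    then show ?thesis
      using that H_G H_reaches_hub[OF assms] by (auto simp: G_verts_def H_verts_def)
  qed
qed (use assms hub_in_clique simple_edges_G in \<open>auto simp: G_verts_def finite_points finite_lines finite_clique\<close>)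

lemma H_common_neighbour:
  assumes "x \<in> H_verts k" "y \<in> H_verts k" "x \<noteq> y" "\<not> G_edge k x y"
  shows "\<exists>z\<in>H_verts k. G_edge k x z \<and> G_edge k z y"
proof -
  have from_point: "\<exists>z\<in>H_verts k. G_edge k x z \<and> G_edge k z y"
    if x: "x \<in> points k" and y: "y \<in> H_verts k" and "x \<noteq> y" "\<not> G_edge k x y" for x y
  proof (cases "y \<in> points k")
    case True
    with that show ?thesis
      by (auto simp: H_verts_def elim!: pointsE intro!: bexI[of _ "clique_vertex x y"])
  next
    case False
    with y obtain p q where "y = clique_vertex p q" "p \<in> points k" "q \<in> points k" "p \<noteq> q"
      by (auto simp: H_verts_def elim: cliqueE)
    moreover have "x \<noteq> p"
      using that calculation by (auto elim!: pointsE)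
    ultimately show ?thesis
      using x by (auto simp: H_verts_def elim!: pointsE intro!: bexI[of _ "clique_vertex x p"])
  qed
  consider "x \<in> points k" | "y \<in> points k" | "x \<in> clique k" "y \<in> clique k"
    using assms(1,2) by (auto simp: H_verts_def)
  then show ?thesis
  proof cases
    case 1
    then show ?thesis
      using from_point assms by blast
  next
    case 2
    then show ?thesis
      using from_point[of y x] assms G_edge_sym by blast
  next
    case 3
    then show ?thesis
      using assms G_edge_clique by blast
  qed
qed

lemma isometric_H: "1 \<le> k \<Longrightarrow> isometric_subgraph (G_verts k) (G_edge k) (H_verts k) (H_edge k)"
  using connected_H H_common_neighbour
  by (intro isometric_subgraph_restrict_edges) (auto simp: H_verts_def G_verts_def)

lemma cop_number_H:
  assumes "1 \<le> k"
  shows "cop_number (H_verts k) (H_edge k) = 1"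
proof (rule cop_number_eq_1)
  show "\<not> cops_win (H_verts k) (H_edge k) 0"
    using hub_in_clique[OF assms] by (intro not_cops_win_0[of hub]) (simp add: H_verts_def)
  show "cops_win (H_verts k) (H_edge k) 1"
  proof (rule cops_win_1_if_dominating_clique[where M = "clique k"])
    show "\<exists>u\<in>clique k. H_edge k u v" if "v \<in> H_verts k" "v \<notin> clique k" for v
      using that point_has_clique_neighbour[OF assms, of v] G_edge_sym
      by (auto simp: H_verts_def restrict_edges_def)
    show "u \<in> clique k" if "v \<in> H_verts k" "v \<notin> clique k" "H_edge k v u" for v u
      using that by (auto simp: H_verts_def restrict_edges_def elim!: pointsE)
  qed (use hub_in_clique[OF assms] G_edge_clique in \<open>auto simp: H_verts_def restrict_edges_def\<close>)
qed

theorem theorem3p1: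
  fixes k :: nat
  assumes "k \<ge> 3"
  shows "\<exists>(V :: nat set) E (VH :: nat set) EH.
           connected_graph V E \<and> isometric_subgraph V E VH EH \<and>
           cop_number VH EH = 1 \<and> \<not> guardable V E VH EH k"
proof -
  have "1 \<le> k"
    using assms by simp
  then show ?thesis
    using connected_G isometric_H cop_number_H not_guardable_H by blast
qed

end
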